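(* Let $\Sigma,\Delta$ be alphabets and $\varphi:\Delta\to2^{\Sigma^*}$ a regular language substitution such that $\varepsilon\in\varphi(\delta)$ for all $\delta\in\Delta$. Then for each $w\in\Delta^+$ and each $v\in S(\varphi(w))$ there exists $\delta\in\Delta$ such that $v\in S(\varphi(\delta))$.
   Context: A regular language substitution is a map $\varphi:\Delta\to2^{\Sigma^*}$ with each $\varphi(\delta)$ regular, extended to words by $\varphi(\delta\cdot w)=\varphi(\delta)\cdot\varphi(w)$. For a language $L\subseteq\Sigma^*$, the set of shortest nonempty words is $S(L)=\{w\in L\setminus\{\varepsilon\}\mid \text{there is no } w'\in L\setminus\{\varepsilon\} \text{ with } |w'|<|w|\}$. *)

theory Defs
  imports Main
begin

datatype 'a rexp = Zero | One | Atom 'a | Plus "'a rexp" "'a rexp"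
  | Times "'a rexp" "'a rexp" | Star "'a rexp"

definition conc :: "'a list set \<Rightarrow> 'a list set \<Rightarrow> 'a list set" where
  "conc A B = {u @ v | u v. u \<in> A \<and> v \<in> B}"

inductive_set kleene_star :: "'a list set \<Rightarrow> 'a list set" for A where
  star_nil: "[] \<in> kleene_star A"
| star_app: "u \<in> A \<Longrightarrow> v \<in> kleene_star A \<Longrightarrow> u @ v \<in> kleene_star A"

fun lang :: "'a rexp \<Rightarrow> 'a list set" where
  "lang Zero = {}"
| "lang One = {[]}"
| "lang (Atom a) = {[a]}"
| "lang (Plus r s) = lang r \<union> lang s"
| "lang (Times r s) = conc (lang r) (lang s)"
| "lang (Star r) = kleene_star (lang r)"

definition regular :: "'a list set \<Rightarrow> bool" where
  "regular L \<longleftrightarrow> (\<exists>r. lang r = L)"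

fun subst_word :: "('d \<Rightarrow> 's list set) \<Rightarrow> 'd list \<Rightarrow> 's list set" where
  "subst_word \<phi> [] = {[]}"
| "subst_word \<phi> (d # w) = conc (\<phi> d) (subst_word \<phi> w)"

definition shortest :: "'a list set \<Rightarrow> 'a list set" where
  "shortest L = {w \<in> L - {[]}. \<not> (\<exists>w' \<in> L - {[]}. length w' < length w)}"

end

theory Submission
  imports Defs "HOL-Library.Sublist"
begin

text \<open>Since every \<open>\<phi>(\<delta>)\<close> contains the empty word, each \<open>\<phi>(\<delta>)\<close> with \<open>\<delta>\<close> occurring in \<open>w\<close>
  is contained in \<open>\<phi>(w)\<close>. Conversely, a nonempty word of \<open>\<phi>(w)\<close> has a nonempty factor taken from
  some \<open>\<phi>(\<delta>)\<close>. For a shortest nonempty \<open>v\<close> in \<open>\<phi>(w)\<close> that factor lies in \<open>\<phi>(w)\<close> again, so by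
  minimality it is all of \<open>v\<close>; and \<open>v\<close> stays shortest in the smaller language \<open>\<phi>(\<delta>)\<close>.\<close>

lemma Nil_in_subst_word:
  assumes "\<And>d. [] \<in> \<phi> d"
  shows "[] \<in> subst_word \<phi> w"
  by (induction w) (auto simp: conc_def assms intro!: exI[of _ "[]"])

lemma subst_letter_subset_subst_word:
  assumes "\<And>d. [] \<in> \<phi> d" and "d \<in> set w"
  shows "\<phi> d \<subseteq> subst_word \<phi> w"
  using assms(2)
proof (induction w)
  case Nil
  then show ?case by simp
next
  case (Cons a w)
  show ?case
  proof (cases "d = a")
    case True
    then show ?thesis
      using Nil_in_subst_word[of \<phi> w, OF assms(1)] by (force simp: conc_def)
  next
    case False
    with Cons have "\<phi> d \<subseteq> subst_word \<phi> w" by simp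
    then show ?thesis using assms(1)[of a] by (force simp: conc_def)
  qed
qed

lemma subst_word_nonempty_factor:
  assumes "v \<in> subst_word \<phi> w" and "v \<noteq> []"
  shows "\<exists>d \<in> set w. \<exists>u \<in> \<phi> d. u \<noteq> [] \<and> sublist u v"
  using assms
proof (induction w arbitrary: v)
  case Nil
  then show ?case by simp
next
  case (Cons a w)
  then obtain x y where v: "v = x @ y" and x: "x \<in> \<phi> a" and y: "y \<in> subst_word \<phi> w"
    by (auto simp: conc_def)
  show ?case
  proof (cases "x = []")
    case True
    with v Cons.prems have "v = y" "y \<noteq> []" by simp_all
    with Cons.IH[OF y] v show ?thesis by auto
  next
    case False
    with v x show ?thesis by auto
  qed
qed

lemma sublist_length_ge_eq:
  assumes "sublist u v" and "length v \<le> length u"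
  shows "u = v"
  using assms by (auto simp: sublist_def)

lemma shortest_subset:
  assumes "A \<subseteq> B" and "v \<in> A" and "v \<in> shortest B"
  shows "v \<in> shortest A"
  using assms by (auto simp: shortest_def)

theorem lemma1:
  fixes \<phi> :: "'d::finite \<Rightarrow> 's::finite list set"
  assumes "\<And>d. regular (\<phi> d)"
    and "\<And>d. [] \<in> \<phi> d"
    and "w \<noteq> []"
    and "v \<in> shortest (subst_word \<phi> w)"
  shows "\<exists>d. v \<in> shortest (\<phi> d)"
proof -
  from assms(4) have v: "v \<in> subst_word \<phi> w" "v \<noteq> []"
    by (auto simp: shortest_def)
  then obtain d u where d: "d \<in> set w" and u: "u \<in> \<phi> d" "u \<noteq> []" "sublist u v"
    using subst_word_nonempty_factor by blast
  have sub: "\<phi> d \<subseteq> subst_word \<phi> w"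
    using subst_letter_subset_subst_word[OF assms(2) d] .
  with u assms(4) have "length v \<le> length u"
    by (force simp: shortest_def)
  with u have "u = v"
    using sublist_length_ge_eq by blast
  with sub u assms(4) show ?thesis
    using shortest_subset by blast
qed

end
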